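(* Let $r \geqslant 4$, and for each $n$ let $uv \in E(K_n)$ be an edge. If $p = p(n)$ satisfies $p\, n^{1/\lambda(r)} \log n \leqslant 1/(2\mathrm{e})$, then $$\mathbb{P}\big( uv \in \langle G_{n,p}\rangle_{K_r}\big) \to 0 \quad \text{as } n \to \infty.$$
   Context: $\lambda(r) = \frac{\binom{r}{2}-2}{r-2}$ and $\mathrm{e}$ denotes Euler's number. The $K_r$-bootstrap process on $K_n$ starting from $G \subset E(K_n)$: $G_0 = G$, $G_{t+1} = G_t \cup \{f \in E(K_n) : f \text{ is the only edge of some } r\text{-clique of } K_n \text{ not in } G_t\}$; the closure is $\langle G\rangle_{K_r} = \bigcup_t G_t$. $G_{n,p}$ is the Erdős–Rényi random graph on $[n]$. *)

theory Defs
  imports Complex_Main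
begin

definition Kn_edges :: "nat \<Rightarrow> nat set set" where
  "Kn_edges n = {e. \<exists>a b. a < n \<and> b < n \<and> a \<noteq> b \<and> e = {a, b}}"

definition clique_edges :: "nat set \<Rightarrow> nat set set" where
  "clique_edges S = {e. e \<subseteq> S \<and> card e = 2}"

definition lambda_r :: "nat \<Rightarrow> real" where
  "lambda_r r = (real (r choose 2) - 2) / (real r - 2)"

definition bootstrap_step :: "nat \<Rightarrow> nat \<Rightarrow> nat set set \<Rightarrow> nat set set" where
  "bootstrap_step r n G = G \<union> {f \<in> Kn_edges n. \<exists>S. S \<subseteq> {0..<n} \<and> card S = r \<and>
       clique_edges S - G = {f}}"

definition bootstrap_closure :: "nat \<Rightarrow> nat \<Rightarrow> nat set set \<Rightarrow> nat set set" where
  "bootstrap_closure r n G = (\<Union>t. (bootstrap_step r n ^^ t) G)"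

definition Gnp_prob :: "nat \<Rightarrow> real \<Rightarrow> (nat set set \<Rightarrow> bool) \<Rightarrow> real" where
  "Gnp_prob n p P = (\<Sum>G\<in>{G. G \<subseteq> Kn_edges n \<and> P G}.
       p ^ card G * (1 - p) ^ card (Kn_edges n - G))"

end

theory Submission
  imports Defs
begin

text \<open>Call \<open>W\<close> dense in \<open>G\<close> if \<open>G\<close> has at least \<open>\<lambda>(r)(|W| - 2) + 1\<close> edges inside \<open>W\<close>, and fix
  \<open>L \<approx> log n\<close>. Unless some dense set has size between \<open>L\<close> and \<open>(C(r,2) + 1)L\<close>, the infected edges
  of the \<open>K\<^sub>r\<close>-process stay covered by a family of dense sets of size below \<open>L\<close>, any two sharing at
  most one vertex. An edge infected through a copy \<open>S\<close> of \<open>K\<^sub>r\<close> is covered again by merging \<open>S\<close>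
  with the parts meeting it in two vertices and then absorbing parts that meet the result in two
  vertices. The merged set stays dense because \<open>K\<^sub>r\<close> has exactly \<open>\<lambda>(r)(r - 2) + 2\<close> edges while
  \<open>K\<^sub>t\<close> with \<open>t < r\<close> has at most \<open>\<lambda>(r)(t - 2) + 1\<close>, and one merging step starting below size
  \<open>L\<close> stays below \<open>(C(r,2) + 1)L\<close>. So if \<open>uv\<close> is infected, either \<open>u, v\<close> lie in a dense set of size
  below \<open>L\<close> or there is a dense set of size between \<open>L\<close> and \<open>(C(r,2) + 1)L\<close>; a union bound over the
  edge sets witnessing density shows that both events have probability \<open>o(1)\<close> when
  \<open>p \<le> n\<^bsup>-1/\<lambda>(r)\<^esup> / (2e log n)\<close>.\<close>

lemma real_choose_two: "real (n choose 2) = real n * (real n - 1) / 2"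
proof -
  have "even (n * (n - 1))" by auto
  then have "real (n * (n - 1) div 2) = real (n * (n - 1)) / 2"
    by (simp add: real_of_nat_div)
  moreover have "real (n * (n - 1)) = real n * (real n - 1)"
    by (cases n) (auto simp: algebra_simps)
  ultimately show ?thesis by (simp add: choose_two)
qed

lemma lambda_r_mult:
  assumes "r \<ge> 3"
  shows "lambda_r r * (real r - 2) = real (r choose 2) - 2"
  using assms by (simp add: lambda_r_def)

lemma one_le_lambda_r:
  assumes "r \<ge> 4"
  shows "1 \<le> lambda_r r"
proof -
  have "real r * 3 \<le> real r * (real r - 1)" using assms by (intro mult_left_mono) auto
  then show ?thesis using assms by (simp add: lambda_r_def real_choose_two field_simps)
qed

lemma lambda_r_le_choose_two:
  assumes "r \<ge> 4"
  shows "lambda_r r \<le> real (r choose 2)"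
proof -
  have "real (r choose 2) * 1 \<le> real (r choose 2) * (real r - 2)"
    using assms by (intro mult_left_mono) auto
  then have "real (r choose 2) - 2 \<le> real (r choose 2) * (real r - 2)" by simp
  then show ?thesis using assms by (simp add: lambda_r_def field_simps)
qed

lemma choose_two_le_lambda_r:
  assumes "r \<ge> 4" "2 \<le> t" "t \<le> r - 1"
  shows "real (t choose 2) \<le> 1 + lambda_r r * (real t - 2)"
proof -
  have "(real r - 2) * (1 + lambda_r r * (real t - 2))
      = (real r - 2) + (lambda_r r * (real r - 2)) * (real t - 2)"
    by (simp add: algebra_simps)
  also have "\<dots> = (real r - 2) + (real r * (real r - 1) / 2 - 2) * (real t - 2)"
    using assms by (simp add: lambda_r_mult real_choose_two)
  finally have "(real r - 2) * (1 + lambda_r r * (real t - 2)) - (real r - 2) * real (t choose 2)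
      = (real t - 2) * ((real r - 2) * (real r - real t) - 2) / 2"
    by (simp add: real_choose_two algebra_simps divide_simps)
  moreover have "(real r - 2) * (real r - real t) \<ge> 2 * 1"
    using assms by (intro mult_mono) auto
  then have "(real t - 2) * ((real r - 2) * (real r - real t) - 2) / 2 \<ge> 0"
    using assms by simp
  ultimately have "(real r - 2) * real (t choose 2) \<le> (real r - 2) * (1 + lambda_r r * (real t - 2))"
    by linarith
  then show ?thesis using assms by simp
qed

lemma lambda_r_excess_sum:
  fixes t :: "'a \<Rightarrow> nat" and \<delta> :: real
  assumes r: "r \<ge> 4" and M: "finite M" and t: "\<forall>C\<in>M. 2 \<le> t C \<and> t C \<le> r"
    and unique: "\<forall>C\<in>M. \<forall>D\<in>M. t C = r \<longrightarrow> t D = r \<longrightarrow> C = D"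
    and \<delta>: "\<delta> \<le> 1" "\<exists>C\<in>M. t C = r \<Longrightarrow> \<delta> \<le> 0"
  shows "-1 \<le> (\<Sum>C\<in>M. 1 + lambda_r r * (real (t C) - 2) - real (t C choose 2)) - \<delta>"
proof -
  define h where "h C = 1 + lambda_r r * (real (t C) - 2) - real (t C choose 2)" for C
  have h_nonneg: "0 \<le> h C" if "C \<in> M" "t C \<noteq> r" for C
  proof -
    have "t C \<le> r - 1" using t that by force
    then show ?thesis using choose_two_le_lambda_r[OF r, of "t C"] t that by (simp add: h_def)
  qed
  show ?thesis
  proof (cases "\<exists>C\<in>M. t C = r")
    case True
    then obtain C0 where C0: "C0 \<in> M" "t C0 = r" by blast
    have "h C0 = -1" using C0 lambda_r_mult[of r] r by (simp add: h_def)
    moreover have "0 \<le> (\<Sum>C\<in>M - {C0}. h C)"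
      using h_nonneg unique C0 by (intro sum_nonneg) blast
    ultimately show ?thesis
      using sum.remove[OF M C0(1), of h] \<delta>(2) True by (simp add: h_def)
  next
    case False
    then have "0 \<le> (\<Sum>C\<in>M. h C)" using h_nonneg by (intro sum_nonneg) blast
    then show ?thesis using \<delta>(1) by (simp add: h_def)
  qed
qed

definition edges_in :: "nat set set \<Rightarrow> nat set \<Rightarrow> nat set set" where
  "edges_in G W = {e\<in>G. e \<subseteq> W}"

definition dense :: "nat \<Rightarrow> nat set set \<Rightarrow> nat set \<Rightarrow> bool" where
  "dense r G W \<longleftrightarrow> lambda_r r * (real (card W) - 2) + 1 \<le> real (card (edges_in G W))"

definition almost_disjoint :: "'a set set \<Rightarrow> bool" where
  "almost_disjoint \<C> \<longleftrightarrow> (\<forall>C\<in>\<C>. \<forall>D\<in>\<C>. C \<noteq> D \<longrightarrow> card (C \<inter> D) \<le> 1)"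

lemma card_Kn_edge: "e \<in> Kn_edges n \<Longrightarrow> card e = 2"
  by (auto simp: Kn_edges_def)

lemma finite_Kn_edges: "finite (Kn_edges n)"
proof -
  have "Kn_edges n \<subseteq> Pow {0..<n}" by (auto simp: Kn_edges_def)
  then show ?thesis by (rule finite_subset) auto
qed

lemma clique_edges_subset_Kn_edges:
  assumes "W \<subseteq> {0..<n}"
  shows "clique_edges W \<subseteq> Kn_edges n"
proof
  fix e assume "e \<in> clique_edges W"
  then have "card e = 2" "e \<subseteq> W" by (auto simp: clique_edges_def)
  then obtain a b where "e = {a, b}" "a \<noteq> b" by (auto simp: card_2_iff)
  moreover have "a < n" "b < n" using \<open>e = {a, b}\<close> \<open>e \<subseteq> W\<close> assms by auto
  ultimately show "e \<in> Kn_edges n" unfolding Kn_edges_def by blast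
qed

lemma finite_clique_edges: "finite S \<Longrightarrow> finite (clique_edges S)"
  by (rule finite_subset[of _ "Pow S"]) (auto simp: clique_edges_def)

lemma card_clique_edges: "finite S \<Longrightarrow> card (clique_edges S) = card S choose 2"
  using n_subsets[of S 2] by (simp add: clique_edges_def)

lemma two_le_card_if_edge_subset:
  assumes "card e = 2" "e \<subseteq> A" "finite A"
  shows "2 \<le> card A"
  using card_mono[OF assms(3,2)] assms(1) by simp

lemma finite_edges_in: "G \<subseteq> Kn_edges n \<Longrightarrow> finite (edges_in G W)"
  by (rule finite_subset[OF _ finite_Kn_edges]) (auto simp: edges_in_def)

lemma edges_in_disjoint:
  assumes G: "G \<subseteq> Kn_edges n" and "finite C" "finite D" "card (C \<inter> D) \<le> 1"
  shows "edges_in G C \<inter> edges_in G D = {}"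
proof (rule ccontr)
  assume "edges_in G C \<inter> edges_in G D \<noteq> {}"
  then obtain e where "e \<in> G" "e \<subseteq> C \<inter> D" by (auto simp: edges_in_def)
  then have "2 \<le> card (C \<inter> D)"
    using two_le_card_if_edge_subset[of e "C \<inter> D"] card_Kn_edge G assms by blast
  then show False using assms by simp
qed

lemma edges_in_disjoint_parts:
  assumes G: "G \<subseteq> Kn_edges n" and \<C>: "almost_disjoint \<C>" "\<forall>C\<in>\<C>. finite C"
    and CD: "C \<in> \<C>" "D \<in> \<C>" "C \<noteq> D"
  shows "edges_in G C \<inter> edges_in G D = {}"
  using \<C> CD by (intro edges_in_disjoint[OF G]) (auto simp: almost_disjoint_def)

lemma card_UN_edges_in:
  assumes G: "G \<subseteq> Kn_edges n" and M: "finite M" "almost_disjoint M" "\<forall>C\<in>M. finite C"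
  shows "card (\<Union>C\<in>M. edges_in G C) = (\<Sum>C\<in>M. card (edges_in G C))"
  using M edges_in_disjoint_parts[OF G M(2,3)] finite_edges_in[OF G]
  by (intro card_UN_disjoint) auto

lemma dense_if_edges_subset:
  assumes G: "G \<subseteq> Kn_edges n" and "E \<subseteq> edges_in G B"
    and "lambda_r r * (real (card B) - 2) + 1 \<le> real (card E)"
  shows "dense r G B"
  using card_mono[OF finite_edges_in[OF G] assms(2)] assms(3) unfolding dense_def by linarith

lemma dense_edge:
  assumes G: "G \<subseteq> Kn_edges n" and "e \<in> G"
  shows "dense r G e"
proof -
  have "e \<in> edges_in G e" using assms by (simp add: edges_in_def)
  then have "1 \<le> card (edges_in G e)"
    using finite_edges_in[OF G, of e] by (auto simp: Suc_le_eq card_gt_0_iff)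
  moreover have "card e = 2" using card_Kn_edge assms by blast
  ultimately show ?thesis by (simp add: dense_def)
qed

lemma almost_disjoint_edges:
  assumes "\<forall>e\<in>G. card e = 2"
  shows "almost_disjoint G"
  unfolding almost_disjoint_def
proof (intro ballI impI)
  fix C D assume CD: "C \<in> G" "D \<in> G" "C \<noteq> D"
  have c2: "card C = 2" "card D = 2" using CD assms by blast+
  then have fin: "finite C" "finite D" by (auto intro: card_ge_0_finite)
  show "card (C \<inter> D) \<le> 1"
  proof (rule ccontr)
    assume "\<not> card (C \<inter> D) \<le> 1"
    then have "C \<inter> D = C" "C \<inter> D = D"
      using card_subset_eq[OF fin(1), of "C \<inter> D"] card_subset_eq[OF fin(2), of "C \<inter> D"]
        card_mono[OF fin(1), of "C \<inter> D"] card_mono[OF fin(2), of "C \<inter> D"] c2 by auto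
    then show False using CD(3) by simp
  qed
qed

lemma card_parts_meeting_le:
  fixes S :: "nat set"
  assumes S: "finite S" and \<C>: "almost_disjoint \<C>" "\<forall>C\<in>\<C>. finite C"
  shows "card {C\<in>\<C>. 2 \<le> card (C \<inter> S)} \<le> card S choose 2"
proof -
  define M where "M = {C\<in>\<C>. 2 \<le> card (C \<inter> S)}"
  define g where "g C = (SOME e. e \<subseteq> C \<inter> S \<and> card e = 2)" for C
  have g: "g C \<subseteq> C \<inter> S \<and> card (g C) = 2" if "C \<in> M" for C
  proof -
    have "2 \<le> card (C \<inter> S)" using that by (simp add: M_def)
    then obtain e where "e \<subseteq> C \<inter> S" "card e = 2" by (rule obtain_subset_with_card_n)
    then show ?thesis unfolding g_def by (rule someI[where P = "\<lambda>e. e \<subseteq> C \<inter> S \<and> card e = 2", OF conjI])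
  qed
  have "inj_on g M"
  proof (rule inj_onI, rule ccontr)
    fix C D assume CD: "C \<in> M" "D \<in> M" "g C = g D" "C \<noteq> D"
    have "g C \<subseteq> C \<inter> D" using g[OF CD(1)] g[OF CD(2)] CD(3) by auto
    moreover have "finite (C \<inter> D)" using \<C>(2) CD(1) by (auto simp: M_def)
    ultimately have "2 \<le> card (C \<inter> D)"
      using two_le_card_if_edge_subset g[OF CD(1)] by blast
    moreover have "card (C \<inter> D) \<le> 1"
      using \<C>(1) CD(1,2,4) unfolding almost_disjoint_def M_def by blast
    ultimately show False by simp
  qed
  moreover have "g ` M \<subseteq> clique_edges S" using g by (auto simp: clique_edges_def)
  ultimately have "card M \<le> card (clique_edges S)"
    using card_inj_on_le finite_clique_edges[OF S] by blast
  then show ?thesis using card_clique_edges[OF S] by (simp add: M_def)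
qed

lemma card_clique_edges_outside_parts:
  fixes S :: "nat set"
  assumes S: "finite S" and M: "finite M" "almost_disjoint M" "\<forall>C\<in>M. finite C"
  shows "card {e\<in>clique_edges S. \<not> (\<exists>C\<in>M. e \<subseteq> C)} + (\<Sum>C\<in>M. card (C \<inter> S) choose 2)
    = card S choose 2"
proof -
  have inside: "{e\<in>clique_edges S. \<exists>C\<in>M. e \<subseteq> C} = (\<Union>C\<in>M. clique_edges (C \<inter> S))"
    by (auto simp: clique_edges_def)
  have "card (\<Union>C\<in>M. clique_edges (C \<inter> S)) = (\<Sum>C\<in>M. card (clique_edges (C \<inter> S)))"
  proof (rule card_UN_disjoint)
    show "\<forall>C\<in>M. \<forall>D\<in>M. C \<noteq> D \<longrightarrow> clique_edges (C \<inter> S) \<inter> clique_edges (D \<inter> S) = {}"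
    proof (intro ballI impI)
      fix C D assume CD: "C \<in> M" "D \<in> M" "C \<noteq> D"
      have "card (C \<inter> D) \<le> 1" using M(2) CD by (auto simp: almost_disjoint_def)
      then show "clique_edges (C \<inter> S) \<inter> clique_edges (D \<inter> S) = {}"
        using two_le_card_if_edge_subset[of _ "C \<inter> D"] M(3) CD(1)
        by (force simp: clique_edges_def)
    qed
  qed (use M S in \<open>auto simp: finite_clique_edges\<close>)
  then have "card {e\<in>clique_edges S. \<exists>C\<in>M. e \<subseteq> C} = (\<Sum>C\<in>M. card (C \<inter> S) choose 2)"
    using inside S by (simp add: card_clique_edges)
  moreover have "card (clique_edges S) = card {e\<in>clique_edges S. \<not> (\<exists>C\<in>M. e \<subseteq> C)}
      + card {e\<in>clique_edges S. \<exists>C\<in>M. e \<subseteq> C}"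
    using finite_clique_edges[OF S] by (subst card_Un_disjoint[symmetric]) (auto intro: arg_cong[where f = card])
  ultimately show ?thesis using card_clique_edges[OF S] by simp
qed

lemma card_Un_Union_le:
  assumes "finite S" "finite M" "\<forall>C\<in>M. finite C"
  shows "card (S \<union> \<Union>M) + (\<Sum>C\<in>M. card (C \<inter> S)) \<le> card S + (\<Sum>C\<in>M. card C)"
proof -
  have "S \<union> \<Union>M = S \<union> (\<Union>C\<in>M. C - S)" by auto
  then have "card (S \<union> \<Union>M) \<le> card S + card (\<Union>C\<in>M. C - S)"
    using card_Un_le by metis
  also have "card (\<Union>C\<in>M. C - S) \<le> (\<Sum>C\<in>M. card (C - S))" using card_UN_le[OF assms(2)] .
  finally have "card (S \<union> \<Union>M) + (\<Sum>C\<in>M. card (C \<inter> S))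
      \<le> card S + (\<Sum>C\<in>M. card (C \<inter> S) + card (C - S))"
    by (simp add: sum.distrib)
  also have "(\<Sum>C\<in>M. card (C \<inter> S) + card (C - S)) = (\<Sum>C\<in>M. card C)"
    using assms(3) by (intro sum.cong) (auto simp: card_Int_Diff[symmetric])
  finally show ?thesis .
qed

lemma clique_edges_outside_parts_subset:
  fixes S :: "nat set"
  assumes \<C>: "\<forall>C\<in>\<C>. finite C" and cover: "\<forall>e\<in>H. \<exists>C\<in>\<C>. e \<subseteq> C"
    and S: "clique_edges S - H \<subseteq> {f}"
  shows "{e\<in>clique_edges S. \<not> (\<exists>C\<in>{C\<in>\<C>. 2 \<le> card (C \<inter> S)}. e \<subseteq> C)} \<subseteq> {f}"
proof (rule subsetI, rule ccontr)
  fix e assume e: "e \<in> {e\<in>clique_edges S. \<not> (\<exists>C\<in>{C\<in>\<C>. 2 \<le> card (C \<inter> S)}. e \<subseteq> C)}" "e \<notin> {f}"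
  then have "e \<in> H" using S by blast
  then obtain C where C: "C \<in> \<C>" "e \<subseteq> C" using cover by blast
  have "card e = 2" "e \<subseteq> C \<inter> S" using C e(1) by (auto simp: clique_edges_def)
  then have "2 \<le> card (C \<inter> S)" using two_le_card_if_edge_subset \<C> C(1) by blast
  then show False using C e(1) by simp
qed

lemma almost_disjoint_unique_superset:
  assumes "almost_disjoint \<C>" "\<forall>C\<in>\<C>. finite C" "2 \<le> card S"
    and "C \<in> \<C>" "D \<in> \<C>" "S \<subseteq> C" "S \<subseteq> D"
  shows "C = D"
proof (rule ccontr)
  assume "C \<noteq> D"
  then have "card (C \<inter> D) \<le> 1" using assms(1,4,5) unfolding almost_disjoint_def by blast
  moreover have "card S \<le> card (C \<inter> D)" using assms(2,4,6,7) by (intro card_mono) auto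
  ultimately show False using assms(3) by simp
qed

text \<open>Completing a copy \<open>S\<close> of \<open>K\<^sub>r\<close> by the edge \<open>f\<close>: every other edge of \<open>S\<close> already lies in a
  part of the cover, so the parts meeting \<open>S\<close> in two vertices carry at least \<open>\<lambda>(r)\<close> edges per
  vertex that they span beyond two.\<close>

lemma clique_merge_edge_count:
  fixes S :: "nat set"
  assumes r: "r \<ge> 4" and G: "G \<subseteq> Kn_edges n"
    and \<C>: "finite \<C>" "almost_disjoint \<C>" "\<forall>C\<in>\<C>. finite C" "\<forall>C\<in>\<C>. dense r G C"
    and cover: "\<forall>e\<in>H. \<exists>C\<in>\<C>. e \<subseteq> C"
    and S: "finite S" "card S = r" "f \<in> clique_edges S" "clique_edges S - H \<subseteq> {f}"
    and M: "M = {C\<in>\<C>. 2 \<le> card (C \<inter> S)}"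
  shows "lambda_r r * (real (card (S \<union> \<Union>M)) - 2) + 1 \<le> real (card (\<Union>C\<in>M. edges_in G C))"
proof -
  let ?l = "lambda_r r"
  define t where "t C = card (C \<inter> S)" for C
  define Q where "Q = {e\<in>clique_edges S. \<not> (\<exists>C\<in>M. e \<subseteq> C)}"
  have MC: "M \<subseteq> \<C>" and finM: "finite M" using M \<C>(1) by auto
  have finC: "finite C" "dense r G C" if "C \<in> M" for C using \<C>(3,4) MC that by auto
  have adM: "almost_disjoint M" using \<C>(2) MC by (auto simp: almost_disjoint_def)
  have t: "2 \<le> t C \<and> t C \<le> r" if "C \<in> M" for C
    using that M S card_mono[OF S(1), of "C \<inter> S"] by (auto simp: t_def)
  have S_sub: "S \<subseteq> C" if "C \<in> M" "t C = r" for C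
    using that S card_subset_eq[OF S(1), of "C \<inter> S"] by (auto simp: t_def)
  have "card Q \<le> 1"
    using card_mono[OF _ clique_edges_outside_parts_subset[OF _ cover S(4)]] \<C>(3)
    by (simp add: Q_def M)
  moreover have "Q = {}" if "C \<in> M" "t C = r" for C
    using S_sub[OF that] that(1) by (auto simp: Q_def clique_edges_def)
  moreover have "C = D" if "C \<in> M" "D \<in> M" "t C = r" "t D = r" for C D
    using almost_disjoint_unique_superset[OF adM _ _ that(1,2) S_sub S_sub] finC that S(2) r by simp
  ultimately have excess: "-1 \<le> (\<Sum>C\<in>M. 1 + ?l * (real (t C) - 2) - real (t C choose 2)) - real (card Q)"
    by (intro lambda_r_excess_sum[OF r finM]) (use t in auto)
  have "card Q + (\<Sum>C\<in>M. t C choose 2) = r choose 2"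
    using card_clique_edges_outside_parts[OF S(1) finM adM] finC S(2) unfolding Q_def t_def by auto
  then have count: "real (card Q) + (\<Sum>C\<in>M. real (t C choose 2)) = real (r choose 2)"
    by (metis of_nat_add of_nat_sum)
  have "card (S \<union> \<Union>M) + (\<Sum>C\<in>M. t C) \<le> r + (\<Sum>C\<in>M. card C)"
    using card_Un_Union_le[OF S(1) finM] finC S(2) unfolding t_def by auto
  then have "real (card (S \<union> \<Union>M)) + (\<Sum>C\<in>M. real (t C)) \<le> real r + (\<Sum>C\<in>M. real (card C))"
    by (metis of_nat_add of_nat_le_iff of_nat_sum)
  then have size: "real (card (S \<union> \<Union>M)) \<le> real r + (\<Sum>C\<in>M. real (card C) - real (t C))"
    by (simp add: sum_subtractf)
  have "?l * (real (card (S \<union> \<Union>M)) - 2) + 1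
      \<le> ?l * (real r - 2) + (\<Sum>C\<in>M. ?l * (real (card C) - real (t C))) + 1"
    using mult_left_mono[OF size, of ?l] one_le_lambda_r[OF r]
    by (simp add: algebra_simps sum_distrib_left)
  also have "\<dots> \<le> (\<Sum>C\<in>M. ?l * (real (card C) - 2) + 1)"
    using excess count lambda_r_mult[of r] r
    by (simp add: sum.distrib sum_subtractf algebra_simps sum_distrib_left)
  also have "\<dots> \<le> (\<Sum>C\<in>M. real (card (edges_in G C)))"
    using finC(2) by (intro sum_mono) (simp add: dense_def)
  also have "\<dots> = real (card (\<Union>C\<in>M. edges_in G C))"
    using card_UN_edges_in[OF G finM adM] finC by simp
  finally show ?thesis .
qed

lemma card_clique_merge_le:
  fixes S :: "nat set"
  assumes S: "finite S" "card S \<le> L" and \<C>: "almost_disjoint \<C>" "\<forall>C\<in>\<C>. finite C \<and> card C \<le> L"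
  shows "card (S \<union> \<Union>{C\<in>\<C>. 2 \<le> card (C \<inter> S)}) \<le> ((card S choose 2) + 1) * L"
proof -
  define M where "M = {C\<in>\<C>. 2 \<le> card (C \<inter> S)}"
  have "card (S \<union> \<Union>M) \<le> card S + (\<Sum>C\<in>M. card C)"
    using card_Un_le[of S "\<Union>M"] card_Union_le_sum_card[of M] by linarith
  also have "(\<Sum>C\<in>M. card C) \<le> card M * L"
    using sum_bounded_above[of M card L] \<C>(2) by (simp add: M_def)
  also have "card M \<le> card S choose 2"
    using card_parts_meeting_le[OF S(1) \<C>(1)] \<C>(2) by (simp add: M_def)
  finally show ?thesis using S(2) unfolding M_def by (simp add: add_mult_distrib2 mult_right_mono)
qed

lemma dense_witness_Un:
  assumes r: "r \<ge> 4" and G: "G \<subseteq> Kn_edges n" and fin: "finite B" "finite C"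
    and E: "E \<subseteq> edges_in G B" "lambda_r r * (real (card B) - 2) + 1 \<le> real (card E)"
    and C: "dense r G C" and disj: "E \<inter> edges_in G C = {}" and meet: "2 \<le> card (B \<inter> C)"
  shows "lambda_r r * (real (card (B \<union> C)) - 2) + 1 \<le> real (card (E \<union> edges_in G C))"
proof -
  have "card (E \<union> edges_in G C) = card E + card (edges_in G C)"
    using card_Un_disjoint[OF finite_subset[OF E(1) finite_edges_in[OF G]] finite_edges_in[OF G] disj] .
  moreover have "real (card (B \<union> C)) \<le> real (card B) + real (card C) - 2"
    using card_Un_Int[OF fin] meet by simp
  then have "lambda_r r * (real (card (B \<union> C)) - 2) \<le> lambda_r r * (real (card B) + real (card C) - 4)"
    using one_le_lambda_r[OF r] by (intro mult_left_mono) auto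
  ultimately show ?thesis using E(2) C by (simp add: dense_def algebra_simps)
qed

definition large_dense_set :: "nat \<Rightarrow> nat \<Rightarrow> nat set set \<Rightarrow> nat \<Rightarrow> bool" where
  "large_dense_set r n G L \<longleftrightarrow>
     (\<exists>W\<subseteq>{0..<n}. L \<le> card W \<and> card W \<le> ((r choose 2) + 1) * L \<and> dense r G W)"

definition small_dense_family :: "nat \<Rightarrow> nat \<Rightarrow> nat set set \<Rightarrow> nat \<Rightarrow> nat set set \<Rightarrow> bool" where
  "small_dense_family r n G L \<C> \<longleftrightarrow> finite \<C> \<and> almost_disjoint \<C> \<and>
     (\<forall>C\<in>\<C>. C \<subseteq> {0..<n} \<and> 2 \<le> card C \<and> card C < L \<and> dense r G C)"

lemma small_dense_familyD:
  assumes "small_dense_family r n G L \<C>"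
  shows "finite \<C>" "almost_disjoint \<C>" "\<forall>C\<in>\<C>. finite C" "\<forall>C\<in>\<C>. dense r G C"
    and "\<forall>C\<in>\<C>. C \<subseteq> {0..<n} \<and> card C < L"
  using assms finite_subset[of _ "{0..<n}"] by (auto simp: small_dense_family_def)

lemma large_dense_setI:
  assumes r: "r \<ge> 4" and W: "W \<subseteq> {0..<n}" "L \<le> card W" "card W \<le> 2 * L" "dense r G W"
  shows "large_dense_set r n G L"
proof -
  have "2 \<le> (r choose 2) + 1" using r zero_less_binomial_iff[of r 2] by linarith
  then have "card W \<le> ((r choose 2) + 1) * L" using W(3) mult_le_mono1 le_trans by blast
  then show ?thesis using W unfolding large_dense_set_def by (intro exI[of _ W]) simp
qed

lemma small_dense_family_subset:
  "small_dense_family r n G L \<C> \<Longrightarrow> \<D> \<subseteq> \<C> \<Longrightarrow> small_dense_family r n G L \<D>"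
  unfolding small_dense_family_def almost_disjoint_def by (meson finite_subset subsetD)

lemma small_dense_family_insert:
  assumes "small_dense_family r n G L \<C>" "B \<subseteq> {0..<n}" "2 \<le> card B" "card B < L" "dense r G B"
    and "\<forall>C\<in>\<C>. card (C \<inter> B) \<le> 1"
  shows "small_dense_family r n G L (insert B \<C>)"
  using assms unfolding small_dense_family_def almost_disjoint_def by (auto simp: Int_commute)

text \<open>The witness edges \<open>E\<close> must avoid the edges of the remaining parts, so that absorbing a part
  adds all of its edges to the witness.\<close>

lemma absorb_one_part:
  assumes r: "r \<ge> 4" and G: "G \<subseteq> Kn_edges n" and U: "small_dense_family r n G L U"
    and B: "B \<subseteq> {0..<n}" "card B < L"
    and E: "E \<subseteq> edges_in G B" "lambda_r r * (real (card B) - 2) + 1 \<le> real (card E)"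
    "\<forall>C\<in>U. E \<inter> edges_in G C = {}"
    and C: "C \<in> U" "2 \<le> card (C \<inter> B)"
  shows "large_dense_set r n G L \<or> (B \<union> C \<subseteq> {0..<n} \<and> card (B \<union> C) < L
    \<and> E \<union> edges_in G C \<subseteq> edges_in G (B \<union> C)
    \<and> lambda_r r * (real (card (B \<union> C)) - 2) + 1 \<le> real (card (E \<union> edges_in G C))
    \<and> (\<forall>D\<in>U - {C}. (E \<union> edges_in G C) \<inter> edges_in G D = {}))"
proof -
  note parts = small_dense_familyD[OF U]
  have Cn: "C \<subseteq> {0..<n}" "card C < L" using parts(5) C(1) by auto
  have fin: "finite B" "finite C" using B(1) Cn(1) finite_subset by blast+
  have E1: "E \<union> edges_in G C \<subseteq> edges_in G (B \<union> C)" using E(1) by (auto simp: edges_in_def)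
  have d1: "lambda_r r * (real (card (B \<union> C)) - 2) + 1 \<le> real (card (E \<union> edges_in G C))"
    using dense_witness_Un[OF r G fin E(1,2)] parts(4) E(3) C by (simp add: Int_commute)
  have disj: "\<forall>D\<in>U - {C}. (E \<union> edges_in G C) \<inter> edges_in G D = {}"
  proof
    fix D assume D: "D \<in> U - {C}"
    then have "edges_in G C \<inter> edges_in G D = {}"
      using edges_in_disjoint_parts[OF G parts(2,3) C(1)] by blast
    then show "(E \<union> edges_in G C) \<inter> edges_in G D = {}" using E(3) D by auto
  qed
  show ?thesis
  proof (cases "L \<le> card (B \<union> C)")
    case True
    have "card (B \<union> C) \<le> 2 * L" using card_Un_le[of B C] B(2) Cn(2) by linarith
    then have "large_dense_set r n G L"
      using large_dense_setI[OF r _ True] B(1) Cn(1) dense_if_edges_subset[OF G E1 d1] by simp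
    then show ?thesis ..
  qed (use B(1) Cn(1) E1 d1 disj in auto)
qed

lemma absorb_parts:
  assumes r: "r \<ge> 4" and G: "G \<subseteq> Kn_edges n" and U: "small_dense_family r n G L U"
    and B: "B \<subseteq> {0..<n}" "card B < L"
    and E: "E \<subseteq> edges_in G B" "lambda_r r * (real (card B) - 2) + 1 \<le> real (card E)"
    "\<forall>C\<in>U. E \<inter> edges_in G C = {}"
  shows "large_dense_set r n G L \<or> (\<exists>B' U'. U' \<subseteq> U \<and> B \<subseteq> B' \<and> B' \<subseteq> {0..<n} \<and> card B' < L
    \<and> dense r G B' \<and> (\<forall>C\<in>U'. card (C \<inter> B') \<le> 1) \<and> (\<forall>C\<in>U - U'. C \<subseteq> B'))"
proof -
  have "finite U" using U by (simp add: small_dense_family_def)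
  then show ?thesis using U B E
  proof (induction U arbitrary: B E rule: finite_psubset_induct)
    case (psubset U)
    show ?case
    proof (cases "\<exists>C\<in>U. 2 \<le> card (C \<inter> B)")
      case False
      then have "\<forall>C\<in>U. card (C \<inter> B) \<le> 1" by auto
      moreover have "dense r G B" using dense_if_edges_subset[OF G psubset.prems(4,5)] .
      ultimately show ?thesis using psubset.prems(2,3) by blast
    next
      case True
      then obtain C where C: "C \<in> U" "2 \<le> card (C \<inter> B)" by blast
      have sub: "U - {C} \<subset> U" using C(1) by blast
      have fam: "small_dense_family r n G L (U - {C})"
        using small_dense_family_subset[OF psubset.prems(1)] by blast
      from absorb_one_part[OF r G psubset.prems C] show ?thesis
      proof (elim disjE conjE)
        assume "B \<union> C \<subseteq> {0..<n}" "card (B \<union> C) < L" "E \<union> edges_in G C \<subseteq> edges_in G (B \<union> C)"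
          "lambda_r r * (real (card (B \<union> C)) - 2) + 1 \<le> real (card (E \<union> edges_in G C))"
          "\<forall>D\<in>U - {C}. (E \<union> edges_in G C) \<inter> edges_in G D = {}"
        from psubset.IH[OF sub fam this] show ?thesis
        proof (elim disjE exE conjE)
          fix B' U' assume R: "U' \<subseteq> U - {C}" "B \<union> C \<subseteq> B'" "B' \<subseteq> {0..<n}" "card B' < L"
            "dense r G B'" "\<forall>C\<in>U'. card (C \<inter> B') \<le> 1" "\<forall>D\<in>U - {C} - U'. D \<subseteq> B'"
          then have "U' \<subseteq> U" "B \<subseteq> B'" "\<forall>D\<in>U - U'. D \<subseteq> B'" by auto
          with R(3-6) show ?thesis by blast
        qed simp
      qed simp
    qed
  qed
qed

definition bootstrap_invariant :: "nat \<Rightarrow> nat \<Rightarrow> nat set set \<Rightarrow> nat \<Rightarrow> nat set set \<Rightarrow> bool" where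
  "bootstrap_invariant r n G L H \<longleftrightarrow> large_dense_set r n G L \<or>
     (\<exists>\<C>. small_dense_family r n G L \<C> \<and> (\<forall>e\<in>H. \<exists>C\<in>\<C>. e \<subseteq> C))"

lemma bootstrap_invariant_initial:
  assumes r: "r \<ge> 4" and G: "G \<subseteq> Kn_edges n" and L: "r \<le> L"
  shows "bootstrap_invariant r n G L G"
proof -
  have "small_dense_family r n G L G"
    unfolding small_dense_family_def
  proof (intro conjI)
    show "finite G" using finite_subset[OF G finite_Kn_edges] .
    show "almost_disjoint G" using G card_Kn_edge by (intro almost_disjoint_edges) blast
    show "\<forall>C\<in>G. C \<subseteq> {0..<n} \<and> 2 \<le> card C \<and> card C < L \<and> dense r G C"
      using G dense_edge[OF G] r L by (auto simp: Kn_edges_def)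
  qed
  then show ?thesis unfolding bootstrap_invariant_def by blast
qed

lemma bootstrap_invariant_merge_parts:
  assumes \<C>: "small_dense_family r n G L \<C>" and cover: "\<forall>e\<in>H. \<exists>C\<in>\<C>. e \<subseteq> C"
    and B: "B \<subseteq> {0..<n}" "2 \<le> card B" "card B < L" "dense r G B" "f \<subseteq> B"
    and U: "U \<subseteq> \<C>" "\<forall>C\<in>U. card (C \<inter> B) \<le> 1" "\<forall>C\<in>\<C> - U. C \<subseteq> B"
  shows "bootstrap_invariant r n G L (insert f H)"
proof -
  have "small_dense_family r n G L (insert B U)"
    using small_dense_family_insert[OF small_dense_family_subset[OF \<C> U(1)] B(1-4) U(2)] .
  moreover have "\<forall>e\<in>insert f H. \<exists>C\<in>insert B U. e \<subseteq> C"
  proof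
    fix e assume "e \<in> insert f H"
    then consider "e = f" | C where "C \<in> \<C>" "e \<subseteq> C" using cover by blast
    then show "\<exists>C\<in>insert B U. e \<subseteq> C"
    proof cases
      case 1
      then show ?thesis using B(5) by blast
    next
      case (2 C)
      then show ?thesis using U(3) by (cases "C \<in> U") auto
    qed
  qed
  ultimately show ?thesis unfolding bootstrap_invariant_def by (intro disjI2 exI[of _ "insert B U"]) simp
qed

lemma bootstrap_invariant_insert:
  assumes r: "r \<ge> 4" and G: "G \<subseteq> Kn_edges n" and L: "r \<le> L"
    and \<C>: "small_dense_family r n G L \<C>" and cover: "\<forall>e\<in>H. \<exists>C\<in>\<C>. e \<subseteq> C"
    and S: "S \<subseteq> {0..<n}" "card S = r" "f \<in> clique_edges S" "clique_edges S - H \<subseteq> {f}"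
  shows "bootstrap_invariant r n G L (insert f H)"
proof -
  define M where "M = {C\<in>\<C>. 2 \<le> card (C \<inter> S)}"
  define B where "B = S \<union> \<Union>M"
  define E where "E = (\<Union>C\<in>M. edges_in G C)"
  note parts = small_dense_familyD[OF \<C>]
  have finS: "finite S" using S(1) finite_subset by blast
  have dB: "lambda_r r * (real (card B) - 2) + 1 \<le> real (card E)"
    unfolding B_def E_def using clique_merge_edge_count[OF r G parts(1-4) cover finS S(2-4) M_def] .
  have EB: "E \<subseteq> edges_in G B" by (auto simp: E_def B_def edges_in_def)
  have Bn: "B \<subseteq> {0..<n}" using S(1) parts(5) by (auto simp: B_def M_def)
  have SB: "S \<subseteq> B" by (simp add: B_def)
  show ?thesis
  proof (cases "L \<le> card B")
    case True
    have "card B \<le> ((r choose 2) + 1) * L"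
      unfolding B_def M_def using card_clique_merge_le[OF finS _ parts(2)] S(2) L parts(3,5)
      by (simp add: less_imp_le)
    then have "large_dense_set r n G L"
      using True Bn dense_if_edges_subset[OF G EB dB] unfolding large_dense_set_def
      by (intro exI[of _ B]) simp
    then show ?thesis by (simp add: bootstrap_invariant_def)
  next
    case False
    have "\<forall>D\<in>\<C> - M. E \<inter> edges_in G D = {}"
    proof
      fix D assume D: "D \<in> \<C> - M"
      have "edges_in G C \<inter> edges_in G D = {}" if "C \<in> M" for C
        using edges_in_disjoint_parts[OF G parts(2,3)] that D by (auto simp: M_def)
      then show "E \<inter> edges_in G D = {}" by (auto simp: E_def)
    qed
    then have "large_dense_set r n G L \<or> (\<exists>B' U'. U' \<subseteq> \<C> - M \<and> B \<subseteq> B' \<and> B' \<subseteq> {0..<n}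
        \<and> card B' < L \<and> dense r G B' \<and> (\<forall>C\<in>U'. card (C \<inter> B') \<le> 1) \<and> (\<forall>C\<in>\<C> - M - U'. C \<subseteq> B'))"
      using absorb_parts[OF r G small_dense_family_subset[OF \<C>, of "\<C> - M"] Bn _ EB dB] False
      by simp
    then show ?thesis
    proof (elim disjE exE conjE)
      fix B' U' assume R: "U' \<subseteq> \<C> - M" "B \<subseteq> B'" "B' \<subseteq> {0..<n}" "card B' < L" "dense r G B'"
        "\<forall>C\<in>U'. card (C \<inter> B') \<le> 1" "\<forall>C\<in>\<C> - M - U'. C \<subseteq> B'"
      have "S \<subseteq> B'" using SB R(2) by blast
      then have "2 \<le> card B'" using card_mono[OF finite_subset[OF R(3)], of S] S(2) r by simp
      moreover have "f \<subseteq> B'" using S(3) SB R(2) by (auto simp: clique_edges_def)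
      moreover have "\<forall>C\<in>\<C> - U'. C \<subseteq> B'" using R(2,7) by (auto simp: B_def)
      ultimately show ?thesis
        using bootstrap_invariant_merge_parts[OF \<C> cover R(3) _ R(4,5)] R(1,6) by blast
    qed (simp add: bootstrap_invariant_def)
  qed
qed

lemma bootstrap_invariant_step:
  assumes r: "r \<ge> 4" and G: "G \<subseteq> Kn_edges n" and L: "r \<le> L"
    and inv: "bootstrap_invariant r n G L H"
  shows "bootstrap_invariant r n G L (bootstrap_step r n H)"
proof -
  define A where "A = {f \<in> Kn_edges n. \<exists>S. S \<subseteq> {0..<n} \<and> card S = r \<and> clique_edges S - H = {f}}"
  text \<open>The edges infected in one round are added one at a time; each still completes a clique
    whose other edges lie in \<open>H\<close>.\<close>
  have "bootstrap_invariant r n G L (H \<union> F)" if "finite F" "F \<subseteq> A" for F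
    using that
  proof (induction F rule: finite_subset_induct)
    case empty
    then show ?case using inv by simp
  next
    case (insert f F)
    from insert.hyps(2) obtain S where S: "S \<subseteq> {0..<n}" "card S = r" "clique_edges S - H = {f}"
      by (auto simp: A_def)
    then have f: "f \<in> clique_edges S" "clique_edges S - (H \<union> F) \<subseteq> {f}" by blast+
    from insert.IH show ?case
      unfolding bootstrap_invariant_def[of r n G L "H \<union> F"]
    proof (elim disjE exE conjE)
      fix \<C> assume "small_dense_family r n G L \<C>" "\<forall>e\<in>H \<union> F. \<exists>C\<in>\<C>. e \<subseteq> C"
      from bootstrap_invariant_insert[OF r G L this S(1,2) f] show ?case by simp
    qed (simp add: bootstrap_invariant_def)
  qed
  moreover have "finite A" using finite_subset[OF _ finite_Kn_edges, of A] by (auto simp: A_def)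
  ultimately show ?thesis by (simp add: bootstrap_step_def A_def)
qed

lemma bootstrap_closure_dense:
  assumes r: "r \<ge> 4" and G: "G \<subseteq> Kn_edges n" and L: "r \<le> L"
    and uv: "{u, v} \<in> bootstrap_closure r n G"
  shows "large_dense_set r n G L \<or> (\<exists>W\<subseteq>{0..<n}. u \<in> W \<and> v \<in> W \<and> card W < L \<and> dense r G W)"
proof -
  obtain t where t: "{u, v} \<in> (bootstrap_step r n ^^ t) G"
    using uv by (auto simp: bootstrap_closure_def)
  have "bootstrap_invariant r n G L ((bootstrap_step r n ^^ t) G)"
    by (induction t) (auto intro: bootstrap_invariant_initial[OF r G L] bootstrap_invariant_step[OF r G L])
  then show ?thesis
    unfolding bootstrap_invariant_def
  proof (elim disjE exE conjE)
    fix \<C> assume \<C>: "small_dense_family r n G L \<C>" "\<forall>e\<in>(bootstrap_step r n ^^ t) G. \<exists>C\<in>\<C>. e \<subseteq> C"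
    then obtain W where W: "W \<in> \<C>" "u \<in> W" "v \<in> W" using t by blast
    then have "W \<subseteq> {0..<n}" "card W < L" "dense r G W"
      using \<C>(1) unfolding small_dense_family_def by simp_all
    then show ?thesis using W(2,3) by (intro disjI2 exI[of _ W]) simp
  qed simp
qed

lemma sum_Pow_power_card:
  fixes a b :: "'a::comm_semiring_1"
  assumes R: "finite R"
  shows "(\<Sum>X\<in>Pow R. a ^ card X * b ^ card (R - X)) = (a + b) ^ card R"
proof -
  have "(\<Sum>X\<in>Pow R. a ^ card X * b ^ card (R - X)) = (\<Sum>X\<in>Pow R. a ^ card X * b ^ (card R - card X))"
    using R by (intro sum.cong) (auto simp: card_Diff_subset finite_subset)
  also have "\<dots> = (\<Sum>k\<le>card R. \<Sum>X\<in>{X\<in>Pow R. card X = k}. a ^ card X * b ^ (card R - card X))"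
    using R by (intro sum.group[symmetric]) (auto simp: card_mono)
  also have "\<dots> = (\<Sum>k\<le>card R. of_nat (card R choose k) * a ^ k * b ^ (card R - k))"
    using R n_subsets[OF R] by (intro sum.cong) (auto simp: mult.assoc)
  also have "\<dots> = (a + b) ^ card R" by (rule binomial_ring[symmetric])
  finally show ?thesis .
qed

lemma sum_supersets_weight:
  fixes p :: real
  assumes K: "finite K" and F: "F \<subseteq> K"
  shows "(\<Sum>G\<in>{G. G \<subseteq> K \<and> F \<subseteq> G}. p ^ card G * (1 - p) ^ card (K - G)) = p ^ card F"
proof -
  have fF: "finite F" using finite_subset[OF F K] .
  have img: "{G. G \<subseteq> K \<and> F \<subseteq> G} = (\<lambda>X. F \<union> X) ` Pow (K - F)"
    using F by (auto intro!: image_eqI[where x = "_ - F"])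
  have inj: "inj_on (\<lambda>X. F \<union> X) (Pow (K - F))"
  proof (rule inj_onI)
    fix X Y assume "X \<in> Pow (K - F)" "Y \<in> Pow (K - F)" "F \<union> X = F \<union> Y"
    then have "X = (F \<union> X) - F" "Y = (F \<union> Y) - F" by auto
    then show "X = Y" using \<open>F \<union> X = F \<union> Y\<close> by simp
  qed
  have "(\<Sum>G\<in>{G. G \<subseteq> K \<and> F \<subseteq> G}. p ^ card G * (1 - p) ^ card (K - G))
     = (\<Sum>X\<in>Pow (K - F). p ^ card F * (p ^ card X * (1 - p) ^ card ((K - F) - X)))"
    unfolding img sum.reindex[OF inj]
  proof (rule sum.cong[OF refl])
    fix X assume X: "X \<in> Pow (K - F)"
    then have "card (F \<union> X) = card F + card X" "K - (F \<union> X) = (K - F) - X"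
      using card_Un_disjoint[OF fF, of X] finite_subset[OF _ K] by auto
    then show "((\<lambda>G. p ^ card G * (1 - p) ^ card (K - G)) \<circ> (\<union>) F) X
        = p ^ card F * (p ^ card X * (1 - p) ^ card (K - F - X))"
      by (simp add: power_add)
  qed
  also have "\<dots> = p ^ card F"
    by (simp add: sum_distrib_left[symmetric] sum_Pow_power_card K)
  finally show ?thesis .
qed

lemma Gnp_prob_union_bound:
  fixes p :: real
  assumes p: "0 \<le> p" "p \<le> 1" and I: "finite I" and FK: "\<forall>i\<in>I. F i \<subseteq> Kn_edges n"
    and PF: "\<And>G. G \<subseteq> Kn_edges n \<Longrightarrow> P G \<Longrightarrow> \<exists>i\<in>I. F i \<subseteq> G"
  shows "Gnp_prob n p P \<le> (\<Sum>i\<in>I. p ^ card (F i))"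
proof -
  define K where "K = Kn_edges n"
  define w where "w G = p ^ card G * (1 - p) ^ card (K - G)" for G
  have fK: "finite K" using finite_Kn_edges by (simp add: K_def)
  have w0: "0 \<le> w G" for G using p by (simp add: w_def)
  have "Gnp_prob n p P = (\<Sum>G\<in>{G. G \<subseteq> K \<and> P G}. w G)" by (simp add: Gnp_prob_def K_def w_def)
  also have "\<dots> \<le> (\<Sum>G\<in>{G. G \<subseteq> K \<and> P G}. \<Sum>i\<in>I. w G * of_bool (F i \<subseteq> G))"
  proof (rule sum_mono)
    fix G assume "G \<in> {G. G \<subseteq> K \<and> P G}"
    then obtain i where i: "i \<in> I" "F i \<subseteq> G" using PF K_def by blast
    then have "w G = w G * of_bool (F i \<subseteq> G)" by simp
    also have "\<dots> \<le> (\<Sum>i\<in>I. w G * of_bool (F i \<subseteq> G))"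
      by (rule member_le_sum[OF i(1) _ I]) (simp add: w0)
    finally show "w G \<le> (\<Sum>i\<in>I. w G * of_bool (F i \<subseteq> G))" .
  qed
  also have "\<dots> \<le> (\<Sum>G\<in>Pow K. \<Sum>i\<in>I. w G * of_bool (F i \<subseteq> G))"
    using fK by (intro sum_mono2) (auto intro!: sum_nonneg simp: w0)
  also have "\<dots> = (\<Sum>i\<in>I. \<Sum>G\<in>Pow K. if F i \<subseteq> G then w G else 0)"
    by (subst sum.swap) (simp add: of_bool_def if_distrib cong: if_cong)
  also have "\<dots> = (\<Sum>i\<in>I. \<Sum>G\<in>{G. G \<subseteq> K \<and> F i \<subseteq> G}. w G)"
  proof (rule sum.cong[OF refl])
    fix i
    show "(\<Sum>G\<in>Pow K. if F i \<subseteq> G then w G else 0) = (\<Sum>G\<in>{G. G \<subseteq> K \<and> F i \<subseteq> G}. w G)"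
      using sum.inter_filter[of "Pow K" w "\<lambda>G. F i \<subseteq> G"] fK by (simp add: Pow_def)
  qed
  also have "\<dots> = (\<Sum>i\<in>I. p ^ card (F i))"
    unfolding w_def using sum_supersets_weight[OF fK] FK K_def by simp
  finally show ?thesis .
qed

definition min_dense_edges :: "nat \<Rightarrow> nat \<Rightarrow> nat" where
  "min_dense_edges r k = nat \<lceil>lambda_r r * (real k - 2) + 1\<rceil>"

lemma min_dense_edges_bounds:
  assumes "r \<ge> 4" "k \<ge> 2"
  shows "1 \<le> min_dense_edges r k"
    and "lambda_r r * (real k - 2) + 1 \<le> real (min_dense_edges r k)"
    and "real (min_dense_edges r k) \<le> lambda_r r * (real k - 2) + 2"
proof -
  have x: "1 \<le> lambda_r r * (real k - 2) + 1" using one_le_lambda_r[OF assms(1)] assms(2) by simp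
  show lower: "lambda_r r * (real k - 2) + 1 \<le> real (min_dense_edges r k)"
    using x by (simp add: min_dense_edges_def le_of_int_ceiling)
  then show "1 \<le> min_dense_edges r k" using x by linarith
  show "real (min_dense_edges r k) \<le> lambda_r r * (real k - 2) + 2"
    using x ceiling_correct[of "lambda_r r * (real k - 2) + 1"] by (simp add: min_dense_edges_def)
qed

lemma min_dense_edges_le_choose_two:
  assumes r: "r \<ge> 4" and k: "k \<ge> 2"
  shows "min_dense_edges r k \<le> (r choose 2) * k"
proof -
  have "real (min_dense_edges r k) \<le> lambda_r r * (real k - 2) + 2"
    by (rule min_dense_edges_bounds(3)[OF r k])
  also have "\<dots> \<le> lambda_r r * real k" using one_le_lambda_r[OF r] by (simp add: algebra_simps)
  also have "\<dots> \<le> real (r choose 2) * real k"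
    using lambda_r_le_choose_two[OF r] by (simp add: mult_right_mono)
  finally show ?thesis by (metis of_nat_le_iff of_nat_mult)
qed

lemma dense_obtain_edges:
  assumes G: "G \<subseteq> Kn_edges n" and "dense r G W"
  obtains F where "F \<subseteq> clique_edges W" "card F = min_dense_edges r (card W)" "F \<subseteq> G"
proof -
  have "min_dense_edges r (card W) \<le> card (edges_in G W)"
    using assms(2) unfolding dense_def min_dense_edges_def by linarith
  then obtain F where F: "F \<subseteq> edges_in G W" "card F = min_dense_edges r (card W)"
    by (rule obtain_subset_with_card_n)
  moreover have "edges_in G W \<subseteq> clique_edges W"
    using G card_Kn_edge by (auto simp: edges_in_def clique_edges_def)
  ultimately have "F \<subseteq> clique_edges W" "F \<subseteq> G" by (auto simp: edges_in_def)
  then show ?thesis using F(2) that by blast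
qed

definition dense_config_weight :: "nat \<Rightarrow> real \<Rightarrow> nat \<Rightarrow> real" where
  "dense_config_weight r p k = real ((k choose 2) choose min_dense_edges r k) * p ^ min_dense_edges r k"

lemma Gnp_prob_le_dense_family:
  fixes p :: real
  assumes p: "0 \<le> p" "p \<le> 1" and \<W>: "finite \<W>" "\<forall>W\<in>\<W>. W \<subseteq> {0..<n}"
    and P: "\<And>G. G \<subseteq> Kn_edges n \<Longrightarrow> P G \<Longrightarrow> \<exists>W\<in>\<W>. dense r G W"
  shows "Gnp_prob n p P \<le> (\<Sum>W\<in>\<W>. dense_config_weight r p (card W))"
proof -
  define m where "m W = min_dense_edges r (card W)" for W :: "nat set"
  define \<F> where "\<F> W = {F. F \<subseteq> clique_edges W \<and> card F = m W}" for W
  have fin\<F>: "finite (\<F> W)" if "W \<in> \<W>" for W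
  proof (rule finite_subset)
    show "\<F> W \<subseteq> Pow (clique_edges W)" by (auto simp: \<F>_def)
    show "finite (Pow (clique_edges W))"
      using that \<W>(2) finite_clique_edges finite_subset by (metis finite_Pow_iff finite_atLeastLessThan)
  qed
  have "Gnp_prob n p P \<le> (\<Sum>i\<in>Sigma \<W> \<F>. p ^ card (snd i))"
  proof (rule Gnp_prob_union_bound[OF p])
    show "finite (Sigma \<W> \<F>)" using \<W>(1) fin\<F> by blast
    show "\<forall>i\<in>Sigma \<W> \<F>. snd i \<subseteq> Kn_edges n"
    proof
      fix i assume "i \<in> Sigma \<W> \<F>"
      then have "fst i \<subseteq> {0..<n}" "snd i \<subseteq> clique_edges (fst i)" using \<W>(2) by (auto simp: \<F>_def)
      then show "snd i \<subseteq> Kn_edges n" using clique_edges_subset_Kn_edges order_trans by metis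
    qed
    fix G assume G: "G \<subseteq> Kn_edges n" "P G"
    obtain W where W: "W \<in> \<W>" "dense r G W" using P[OF G] by blast
    obtain F where F: "F \<subseteq> clique_edges W" "card F = m W" "F \<subseteq> G"
      unfolding m_def by (rule dense_obtain_edges[OF G(1) W(2)])
    have "(W, F) \<in> Sigma \<W> \<F>" using W(1) F(1,2) by (simp add: \<F>_def)
    then show "\<exists>i\<in>Sigma \<W> \<F>. snd i \<subseteq> G" using F(3) by (intro bexI[of _ "(W, F)"]) simp_all
  qed
  also have "\<dots> = (\<Sum>W\<in>\<W>. \<Sum>F\<in>\<F> W. p ^ card F)"
    using \<W>(1) fin\<F> by (simp add: sum.Sigma split_def)
  also have "\<dots> = (\<Sum>W\<in>\<W>. real ((card W choose 2) choose m W) * p ^ m W)"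
  proof (rule sum.cong[OF refl])
    fix W assume "W \<in> \<W>"
    then have "finite W" using \<W>(2) finite_subset by blast
    then have "card (\<F> W) = (card W choose 2) choose m W"
      using n_subsets[OF finite_clique_edges] card_clique_edges by (simp add: \<F>_def)
    then show "(\<Sum>F\<in>\<F> W. p ^ card F) = real ((card W choose 2) choose m W) * p ^ m W"
      by (simp add: \<F>_def)
  qed
  finally show ?thesis by (simp add: m_def dense_config_weight_def)
qed

lemma sum_card_le:
  fixes f :: "nat \<Rightarrow> real" and \<W> :: "'a set set"
  assumes "finite \<W>" "finite K" "card ` \<W> \<subseteq> K" "\<forall>k\<in>K. 0 \<le> f k"
    and "\<forall>k\<in>K. card {W\<in>\<W>. card W = k} \<le> c k"
  shows "(\<Sum>W\<in>\<W>. f (card W)) \<le> (\<Sum>k\<in>K. real (c k) * f k)"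
proof -
  have "(\<Sum>W\<in>\<W>. f (card W)) = (\<Sum>k\<in>K. \<Sum>W\<in>{W\<in>\<W>. card W = k}. f (card W))"
    using assms(1-3) by (rule sum.group[symmetric])
  also have "\<dots> = (\<Sum>k\<in>K. real (card {W\<in>\<W>. card W = k}) * f k)" by simp
  also have "\<dots> \<le> (\<Sum>k\<in>K. real (c k) * f k)"
    using assms(4,5) by (intro sum_mono mult_right_mono) auto
  finally show ?thesis .
qed

lemma card_sets_containing_pair_le:
  assumes uv: "u < n" "v < n" "u \<noteq> v"
  shows "card {W. W \<subseteq> {0..<n} \<and> u \<in> W \<and> v \<in> W \<and> card W = k} \<le> n ^ (k - 2)"
proof -
  define X where "X = {X. X \<subseteq> {0..<n} - {u, v} \<and> card X = k - 2}"
  have finX: "finite X" by (simp add: X_def)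
  have "{W. W \<subseteq> {0..<n} \<and> u \<in> W \<and> v \<in> W \<and> card W = k} \<subseteq> (\<lambda>Y. Y \<union> {u, v}) ` X"
  proof
    fix W assume W: "W \<in> {W. W \<subseteq> {0..<n} \<and> u \<in> W \<and> v \<in> W \<and> card W = k}"
    then have "card (W - {u, v}) = k - 2" using uv by (subst card_Diff_subset) auto
    then have "W - {u, v} \<in> X" using W by (auto simp: X_def)
    moreover have "W = (W - {u, v}) \<union> {u, v}" using W by auto
    ultimately show "W \<in> (\<lambda>Y. Y \<union> {u, v}) ` X" by blast
  qed
  then have "card {W. W \<subseteq> {0..<n} \<and> u \<in> W \<and> v \<in> W \<and> card W = k}
      \<le> card ((\<lambda>Y. Y \<union> {u, v}) ` X)"
    using finX by (intro card_mono finite_imageI)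
  also have "\<dots> \<le> card X" using finX by (rule card_image_le)
  also have "card X = (n - 2) choose (k - 2)"
  proof -
    have "card ({0..<n} - {u, v}) = n - 2" using uv by simp
    then show ?thesis using n_subsets[of "{0..<n} - {u, v}" "k - 2"] by (simp add: X_def)
  qed
  also have "\<dots> \<le> (n - 2) ^ (k - 2)" by (cases "k - 2 \<le> n - 2") (auto simp: binomial_le_pow binomial_eq_0)
  also have "\<dots> \<le> n ^ (k - 2)" by (rule power_mono) auto
  finally show ?thesis .
qed

lemma power_div_fact_le_exp:
  fixes x :: real
  assumes "0 \<le> x"
  shows "x ^ m / fact m \<le> exp x"
proof -
  have "(\<Sum>i\<in>{m}. x ^ i / fact i) \<le> (\<Sum>i. x ^ i / fact i)"
    by (rule sum_le_suminf) (use summable_exp[of x] assms in \<open>auto simp: field_simps\<close>)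
  also have "\<dots> = exp x" using sums_unique[OF exp_converges[of x]] by (simp add: field_simps)
  finally show ?thesis by simp
qed

lemma binomial_le_exp_power: "real (N choose m) \<le> (exp 1 * real N / real m) ^ m"
proof (cases "m = 0")
  case False
  have "real (N choose m) * fact m \<le> real N ^ m"
    using binomial_fact_pow[of N m] by (metis of_nat_fact of_nat_le_iff of_nat_mult of_nat_power)
  moreover have "real m ^ m \<le> exp 1 ^ m * fact m"
    using power_div_fact_le_exp[of "real m" m] by (simp add: exp_of_nat_mult[symmetric] field_simps)
  ultimately have "real (N choose m) * real m ^ m \<le> real N ^ m * exp 1 ^ m"
    by (smt (verit) mult_left_mono mult.assoc mult.commute of_nat_0_le_iff exp_ge_zero
        zero_le_power fact_ge_zero)
  then show ?thesis using False by (simp add: field_simps)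
qed simp

lemma choose_edges_power_le:
  assumes lam: "lam \<ge> 1" and n: "real n \<ge> 1" and k: "k \<ge> 2" and m: "m \<ge> 1"
    "real m \<ge> lam * (real k - 2) + 1"
    and p: "0 \<le> p" "p \<le> \<delta> * real n powr (-1 / lam)" and \<delta>: "0 \<le> \<delta>"
  shows "real ((k choose 2) choose m) * p ^ m \<le> (exp 1 * real k * \<delta>) ^ m * real n powr (- real m / lam)"
proof -
  have "real k - 1 \<le> real m" using m(2) lam k mult_right_mono[OF lam, of "real k - 2"] by simp
  then have "real (k choose 2) \<le> real k * real m"
    using k by (simp add: real_choose_two divide_le_eq mult_left_mono)
  then have "exp 1 * real (k choose 2) / real m \<le> exp 1 * real k"
    using m(1) by (simp add: divide_le_eq mult.assoc mult.left_commute)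
  then have "real ((k choose 2) choose m) \<le> (exp 1 * real k) ^ m"
    using binomial_le_exp_power[of "k choose 2" m] power_mono[of _ "exp 1 * real k" m] by fastforce
  moreover have "p ^ m \<le> \<delta> ^ m * real n powr (- real m / lam)"
    using power_mono[OF p(2,1), of m] n by (simp add: power_mult_distrib powr_power)
  ultimately show ?thesis
    using mult_mono[of _ "(exp 1 * real k) ^ m" "p ^ m"] p(1) by (fastforce simp: power_mult_distrib)
qed

lemma small_dense_sets_term_le:
  assumes lam: "lam \<ge> 1" and n: "real n \<ge> 1" and k: "k \<ge> 2" and m: "m \<ge> 1"
    "real m \<ge> lam * (real k - 2) + 1"
    and p: "0 \<le> p" "p \<le> \<delta> * real n powr (-1 / lam)" and \<delta>: "0 \<le> \<delta>" "exp 1 * real k * \<delta> \<le> 1"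
  shows "real n ^ (k - 2) * (real ((k choose 2) choose m) * p ^ m) \<le> real n powr (-1 / lam)"
proof -
  have "real n ^ (k - 2) * (real ((k choose 2) choose m) * p ^ m)
      \<le> real n ^ (k - 2) * ((exp 1 * real k * \<delta>) ^ m * real n powr (- real m / lam))"
    by (rule mult_left_mono[OF choose_edges_power_le[OF lam n k m p \<delta>(1)]]) simp
  also have "\<dots> \<le> real n ^ (k - 2) * (1 * real n powr (- real m / lam))"
    using \<delta> by (intro mult_left_mono mult_right_mono power_le_one) auto
  also have "\<dots> = real n powr (real (k - 2) - real m / lam)"
    using n by (simp add: powr_diff powr_realpow powr_minus divide_inverse)
  also have "\<dots> \<le> real n powr (-1 / lam)"
  proof (rule powr_mono[OF _ n])
    have "(lam * (real k - 2) + 1) / lam \<le> real m / lam" using m lam by (intro divide_right_mono) auto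
    then show "real (k - 2) - real m / lam \<le> -1 / lam" using k lam by (simp add: of_nat_diff field_simps)
  qed
  finally show ?thesis .
qed

lemma exp_power_le_inverse_cube:
  fixes c :: real
  assumes "0 \<le> c" "ln (real n) \<le> real k" "0 < ln (real n)" "exp 1 * c / ln (real n) \<le> exp (-3)"
  shows "(exp 1 * c / real k) ^ k \<le> 1 / real n ^ 3"
proof -
  have "exp 1 * c / real k \<le> exp (-3)"
    using assms order_trans[OF divide_left_mono[OF assms(2)]] by auto
  then have "(exp 1 * c / real k) ^ k \<le> exp (-3) ^ k" using assms(1) by (intro power_mono) auto
  also have "\<dots> = exp (- 3 * real k)" by (simp add: exp_of_nat_mult[symmetric] mult.commute)
  also have "\<dots> \<le> exp (- 3 * ln (real n))" using assms(2) by simp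
  also have "\<dots> = 1 / real n ^ 3"
  proof -
    have "real n > 0" using assms(3) by (cases n) auto
    then have "exp (3 * ln (real n)) = real n ^ 3"
      using exp_of_nat_mult[of 3 "ln (real n)"] by simp
    then show ?thesis by (simp add: exp_minus divide_inverse)
  qed
  finally show ?thesis .
qed

lemma large_dense_sets_term_le:
  assumes lam: "lam \<ge> 1" and n: "real n \<ge> 1" and k: "k \<ge> 3" and m: "m \<ge> 1"
    "real m \<ge> lam * (real k - 2) + 1" "m \<le> \<Lambda> * k"
    and p: "0 \<le> p" "p \<le> \<delta> * real n powr (-1 / lam)" and \<delta>: "0 \<le> \<delta>" "exp 1 * real k * \<delta> \<le> K"
    and K: "K \<ge> 1" and ln: "ln (real n) \<le> real k" "0 < ln (real n)"
    "exp 1 * K ^ \<Lambda> / ln (real n) \<le> exp (-3)"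
  shows "real (n choose k) * (real ((k choose 2) choose m) * p ^ m) \<le> 1 / real n"
proof -
  have binom: "real (n choose k) \<le> (exp 1 / real k) ^ k * real n ^ k"
    using binomial_le_exp_power[of n k] by (simp add: power_mult_distrib power_divide)
  have "real ((k choose 2) choose m) * p ^ m \<le> (exp 1 * real k * \<delta>) ^ m * real n powr (- real m / lam)"
    by (rule choose_edges_power_le[OF lam n _ m(1,2) p \<delta>(1)]) (use k in simp)
  also have "\<dots> \<le> (K ^ \<Lambda>) ^ k * real n powr (- real m / lam)"
  proof (rule mult_right_mono)
    have "(exp 1 * real k * \<delta>) ^ m \<le> K ^ m" using \<delta> by (intro power_mono) auto
    also have "\<dots> \<le> (K ^ \<Lambda>) ^ k" using K m(3) by (simp add: power_mult[symmetric] power_increasing)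
    finally show "(exp 1 * real k * \<delta>) ^ m \<le> (K ^ \<Lambda>) ^ k" .
  qed simp
  finally have edges: "real ((k choose 2) choose m) * p ^ m \<le> (K ^ \<Lambda>) ^ k * real n powr (- real m / lam)" .
  have "real (n choose k) * (real ((k choose 2) choose m) * p ^ m)
      \<le> ((exp 1 / real k) ^ k * real n ^ k) * ((K ^ \<Lambda>) ^ k * real n powr (- real m / lam))"
    using p(1) by (intro mult_mono[OF binom edges]) auto
  also have "\<dots> = (exp 1 * K ^ \<Lambda> / real k) ^ k * (real n ^ k * real n powr (- real m / lam))"
    by (simp add: power_mult_distrib power_divide)
  also have "\<dots> \<le> (1 / real n ^ 3) * real n ^ 2"
  proof (rule mult_mono)
    show "(exp 1 * K ^ \<Lambda> / real k) ^ k \<le> 1 / real n ^ 3"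
      using K ln by (intro exp_power_le_inverse_cube) auto
    have "real k - real m / lam \<le> 2"
      using m(2) lam divide_right_mono[of "lam * (real k - 2)" "real m" lam] by simp
    then show "real n ^ k * real n powr (- real m / lam) \<le> real n ^ 2"
      using powr_mono[of "real k - real m / lam" 2 "real n"] n
      by (simp add: powr_diff powr_realpow powr_minus divide_inverse)
  qed auto
  also have "\<dots> = 1 / real n" using n by (simp add: power2_eq_square power3_eq_cube)
  finally show ?thesis .
qed

lemma sum_small_dense_sets_le:
  assumes r: "r \<ge> 4" and uv: "u < n" "v < n" "u \<noteq> v" and ln: "0 < ln (real n)"
    and p: "0 \<le> p" "p \<le> real n powr (-1 / lambda_r r) / (2 * exp 1 * ln (real n))"
    and L: "real L \<le> 2 * ln (real n)"
  shows "(\<Sum>W\<in>{W. W \<subseteq> {0..<n} \<and> u \<in> W \<and> v \<in> W \<and> card W < L}. dense_config_weight r p (card W))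
    \<le> 2 * ln (real n) * real n powr (-1 / lambda_r r)"
proof -
  define \<W> where "\<W> = {W. W \<subseteq> {0..<n} \<and> u \<in> W \<and> v \<in> W \<and> card W < L}"
  have n: "real n \<ge> 1" using uv by simp
  have "card ` \<W> \<subseteq> {2..<L}"
  proof
    fix k assume "k \<in> card ` \<W>"
    then obtain W where W: "W \<in> \<W>" "k = card W" by blast
    then have "card {u, v} \<le> card W" using finite_subset[of W "{0..<n}"]
      by (intro card_mono) (auto simp: \<W>_def)
    then show "k \<in> {2..<L}" using W uv by (auto simp: \<W>_def)
  qed
  moreover have "\<forall>k\<in>{2..<L}. card {W\<in>\<W>. card W = k} \<le> n ^ (k - 2)"
  proof
    fix k assume "k \<in> {2..<L}"
    then have "{W\<in>\<W>. card W = k} = {W. W \<subseteq> {0..<n} \<and> u \<in> W \<and> v \<in> W \<and> card W = k}"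
      by (auto simp: \<W>_def)
    then show "card {W\<in>\<W>. card W = k} \<le> n ^ (k - 2)" using card_sets_containing_pair_le[OF uv] by simp
  qed
  ultimately have "(\<Sum>W\<in>\<W>. dense_config_weight r p (card W))
      \<le> (\<Sum>k\<in>{2..<L}. real (n ^ (k - 2)) * dense_config_weight r p k)"
    using p(1) by (intro sum_card_le) (auto simp: \<W>_def dense_config_weight_def)
  also have "\<dots> \<le> (\<Sum>k\<in>{2..<L}. real n powr (-1 / lambda_r r))"
  proof (rule sum_mono)
    fix k assume k: "k \<in> {2..<L}"
    have "exp 1 * real k * (1 / (2 * exp 1 * ln (real n))) \<le> 1" using k L ln by simp
    then show "real (n ^ (k - 2)) * dense_config_weight r p k \<le> real n powr (-1 / lambda_r r)"
      unfolding dense_config_weight_def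
      using small_dense_sets_term_le[OF one_le_lambda_r[OF r] n _ min_dense_edges_bounds(1,2)[OF r]
          p(1), of k "1 / (2 * exp 1 * ln (real n))"] k p(2) ln
      by (simp add: field_simps)
  qed
  also have "\<dots> \<le> 2 * ln (real n) * real n powr (-1 / lambda_r r)"
    using L by (simp add: mult_right_mono)
  finally show ?thesis unfolding \<W>_def .
qed

lemma sum_large_dense_sets_le:
  assumes r: "r \<ge> 4" and n: "real n \<ge> 1" and ln: "0 < ln (real n)"
    and small: "exp 1 * real ((r choose 2) + 1) ^ (r choose 2) / ln (real n) \<le> exp (-3)"
    and p: "0 \<le> p" "p \<le> real n powr (-1 / lambda_r r) / (2 * exp 1 * ln (real n))"
    and L: "ln (real n) \<le> real L" "real L \<le> 2 * ln (real n)" "r \<le> L"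
  shows "(\<Sum>W\<in>{W. W \<subseteq> {0..<n} \<and> L \<le> card W \<and> card W \<le> ((r choose 2) + 1) * L}.
      dense_config_weight r p (card W)) \<le> (2 * real ((r choose 2) + 1) * ln (real n) + 1) / real n"
proof -
  define K where "K = (r choose 2) + 1"
  define \<W> where "\<W> = {W. W \<subseteq> {0..<n} \<and> L \<le> card W \<and> card W \<le> K * L}"
  have "(\<Sum>W\<in>\<W>. dense_config_weight r p (card W))
      \<le> (\<Sum>k\<in>{L..K * L}. real (n choose k) * dense_config_weight r p k)"
  proof (rule sum_card_le)
    show "\<forall>k\<in>{L..K * L}. card {W\<in>\<W>. card W = k} \<le> n choose k"
    proof
      fix k
      have "card {W\<in>\<W>. card W = k} \<le> card {W. W \<subseteq> {0..<n} \<and> card W = k}"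
        by (rule card_mono) (auto simp: \<W>_def)
      then show "card {W\<in>\<W>. card W = k} \<le> n choose k" using n_subsets[of "{0..<n}" k] by simp
    qed
  qed (use p(1) in \<open>auto simp: \<W>_def dense_config_weight_def\<close>)
  also have "\<dots> \<le> (\<Sum>k\<in>{L..K * L}. 1 / real n)"
  proof (rule sum_mono)
    fix k assume k: "k \<in> {L..K * L}"
    have "real k \<le> real K * real L" using k by (metis atLeastAtMost_iff of_nat_le_iff of_nat_mult)
    also have "\<dots> \<le> real K * (2 * ln (real n))" using L(2) by (intro mult_left_mono) auto
    finally have "real k \<le> real K * (2 * ln (real n))" .
    then have "exp 1 * real k * (1 / (2 * exp 1 * ln (real n))) \<le> real K" using ln by (simp add: field_simps)
    moreover have "min_dense_edges r k \<le> (r choose 2) * k"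
      using k L(3) r by (intro min_dense_edges_le_choose_two) auto
    ultimately show "real (n choose k) * dense_config_weight r p k \<le> 1 / real n"
      unfolding dense_config_weight_def
      using large_dense_sets_term_le[OF one_le_lambda_r[OF r] n _ min_dense_edges_bounds(1,2)[OF r]
          _ p(1), of k "r choose 2" "1 / (2 * exp 1 * ln (real n))" K] k L r ln small p(2)
      by (simp add: K_def field_simps)
  qed
  also have "\<dots> = real (card {L..K * L}) / real n" by simp
  also have "\<dots> \<le> (2 * real K * ln (real n) + 1) / real n"
  proof (rule divide_right_mono)
    have "card {L..K * L} \<le> K * L + 1" by simp
    then have "real (card {L..K * L}) \<le> real K * real L + 1" by (metis of_nat_1 of_nat_add of_nat_le_iff of_nat_mult)
    also have "\<dots> \<le> real K * (2 * ln (real n)) + 1" using L(2) by (simp add: mult_left_mono)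
    finally show "real (card {L..K * L}) \<le> 2 * real K * ln (real n) + 1" by simp
  qed simp
  finally show ?thesis by (simp add: \<W>_def K_def)
qed

lemma le_powr_minus_div_if_mult_le:
  fixes p x l :: real
  assumes "p * x powr (1 / l) * ln x \<le> 1 / (2 * exp 1)" "1 < x"
  shows "p \<le> x powr (-1 / l) / (2 * exp 1 * ln x)"
proof -
  have pos: "0 < x powr (1 / l)" "0 < ln x" using assms(2) by auto
  then have "p \<le> 1 / (2 * exp 1) / (x powr (1 / l) * ln x)"
    using assms(1) by (subst pos_le_divide_eq) (simp_all add: mult.assoc)
  also have "\<dots> = inverse (x powr (1 / l)) / (2 * exp 1 * ln x)"
    using pos by (simp add: field_simps)
  also have "inverse (x powr (1 / l)) = x powr (-1 / l)"
    unfolding minus_divide_left[symmetric] by (rule powr_minus[symmetric])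
  finally show ?thesis .
qed

lemma Gnp_prob_closure_le:
  fixes p :: real
  assumes r: "r \<ge> 4" and uv: "u < n" "v < n" "u \<noteq> v" and ln: "real r \<le> ln (real n)"
    and small: "exp 1 * real ((r choose 2) + 1) ^ (r choose 2) / ln (real n) \<le> exp (-3)"
    and p: "0 \<le> p" "p \<le> 1" "p \<le> real n powr (-1 / lambda_r r) / (2 * exp 1 * ln (real n))"
  shows "Gnp_prob n p (\<lambda>G. {u, v} \<in> bootstrap_closure r n G)
    \<le> 2 * ln (real n) * real n powr (-1 / lambda_r r)
      + (2 * real ((r choose 2) + 1) * ln (real n) + 1) / real n"
proof -
  define L where "L = nat \<lceil>ln (real n)\<rceil>"
  define \<W>\<^sub>1 where "\<W>\<^sub>1 = {W. W \<subseteq> {0..<n} \<and> u \<in> W \<and> v \<in> W \<and> card W < L}"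
  define \<W>\<^sub>2 where "\<W>\<^sub>2 = {W. W \<subseteq> {0..<n} \<and> L \<le> card W \<and> card W \<le> ((r choose 2) + 1) * L}"
  have ln4: "4 \<le> ln (real n)" using ln r by linarith
  have n: "real n \<ge> 1" using uv by simp
  have L: "ln (real n) \<le> real L" "real L \<le> 2 * ln (real n)" "r \<le> L"
    using ln4 ln real_nat_ceiling_ge[of "ln (real n)"] of_int_ceiling_le_add_one[of "ln (real n)"]
    unfolding L_def by linarith+
  have fin: "finite \<W>\<^sub>1" "finite \<W>\<^sub>2"
    by (rule finite_subset[of _ "Pow {0..<n}"], auto simp: \<W>\<^sub>1_def \<W>\<^sub>2_def)+
  have "Gnp_prob n p (\<lambda>G. {u, v} \<in> bootstrap_closure r n G)
      \<le> (\<Sum>W\<in>\<W>\<^sub>1 \<union> \<W>\<^sub>2. dense_config_weight r p (card W))"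
  proof (rule Gnp_prob_le_dense_family[OF p(1,2)])
    fix G assume "G \<subseteq> Kn_edges n" "{u, v} \<in> bootstrap_closure r n G"
    from bootstrap_closure_dense[OF r this(1) L(3) this(2)]
    show "\<exists>W\<in>\<W>\<^sub>1 \<union> \<W>\<^sub>2. dense r G W"
      unfolding large_dense_set_def
    proof (elim disjE exE conjE)
      fix W assume "W \<subseteq> {0..<n}" "L \<le> card W" "card W \<le> ((r choose 2) + 1) * L" "dense r G W"
      then show ?thesis by (intro bexI[of _ W]) (simp_all add: \<W>\<^sub>2_def)
    next
      fix W assume "W \<subseteq> {0..<n}" "u \<in> W" "v \<in> W" "card W < L" "dense r G W"
      then show ?thesis by (intro bexI[of _ W]) (simp_all add: \<W>\<^sub>1_def)
    qed
  qed (use fin in \<open>auto simp: \<W>\<^sub>1_def \<W>\<^sub>2_def\<close>)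
  also have "\<dots> \<le> (\<Sum>W\<in>\<W>\<^sub>1. dense_config_weight r p (card W)) + (\<Sum>W\<in>\<W>\<^sub>2. dense_config_weight r p (card W))"
    using sum_Un[OF fin, of "\<lambda>W. dense_config_weight r p (card W)"] p(1)
      sum_nonneg[of "\<W>\<^sub>1 \<inter> \<W>\<^sub>2" "\<lambda>W. dense_config_weight r p (card W)"]
    by (simp add: dense_config_weight_def)
  also have "\<dots> \<le> 2 * ln (real n) * real n powr (-1 / lambda_r r)
      + (2 * real ((r choose 2) + 1) * ln (real n) + 1) / real n"
    using sum_small_dense_sets_le[OF r uv _ p(1,3) L(2)] sum_large_dense_sets_le[OF r n _ small p(1,3) L]
      ln4 unfolding \<W>\<^sub>1_def \<W>\<^sub>2_def by (intro add_mono) simp_all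
  finally show ?thesis .
qed

lemma ln_over_powr_tendsto_zero:
  fixes s :: real
  assumes s: "0 < s"
  shows "(\<lambda>n. ln (real n) / real n powr s) \<longlonglongrightarrow> 0"
proof (rule tendsto_sandwich[of "\<lambda>_. 0" _ _ "\<lambda>n. (2 / s) * real n powr (- (s / 2))"])
  show "\<forall>\<^sub>F n in sequentially. 0 \<le> ln (real n) / real n powr s"
    using eventually_ge_at_top[of "1::nat"] by eventually_elim simp
  show "\<forall>\<^sub>F n in sequentially. ln (real n) / real n powr s \<le> (2 / s) * real n powr (- (s / 2))"
    using eventually_ge_at_top[of "1::nat"]
  proof eventually_elim
    case (elim n)
    have "ln (real n) \<le> real n powr (s / 2) / (s / 2)" using elim s by (intro ln_powr_bound) auto
    then have "ln (real n) / real n powr s \<le> real n powr (s / 2) / (s / 2) / real n powr s"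
      by (rule divide_right_mono) simp
    also have "\<dots> = (2 / s) * real n powr (- (s / 2))"
    proof -
      have "real n powr s = real n powr (s / 2) * real n powr (s / 2)" by (simp add: powr_add[symmetric])
      then show ?thesis using elim by (simp add: powr_minus field_simps)
    qed
    finally show ?case .
  qed
  show "(\<lambda>n. (2 / s) * real n powr (- (s / 2))) \<longlonglongrightarrow> 0"
    using s by (intro tendsto_mult_right_zero tendsto_neg_powr filterlim_real_sequentially) simp
qed simp

lemma closure_bound_tendsto_zero:
  fixes s c :: real
  assumes "0 < s"
  shows "(\<lambda>n. 2 * ln (real n) * real n powr (- s) + (2 * c * ln (real n) + 1) / real n) \<longlonglongrightarrow> 0"
proof -
  have "(\<lambda>n. 2 * (ln (real n) / real n powr s) + 2 * c * (ln (real n) / real n powr 1)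
      + inverse (real n)) \<longlonglongrightarrow> 2 * 0 + 2 * c * 0 + 0"
    using ln_over_powr_tendsto_zero[OF assms] ln_over_powr_tendsto_zero[of 1] lim_inverse_n
    by (intro tendsto_intros) auto
  then show ?thesis by (simp add: powr_minus divide_inverse algebra_simps)
qed

theorem proposition3p1:
  fixes r :: nat and p :: "nat \<Rightarrow> real" and u v :: "nat \<Rightarrow> nat"
  assumes "r \<ge> 4"
    and "\<forall>n\<ge>2. u n < n \<and> v n < n \<and> u n \<noteq> v n"
    and "\<forall>n. 0 \<le> p n \<and> p n \<le> 1"
    and "\<forall>n. p n * real n powr (1 / lambda_r r) * ln (real n) \<le> 1 / (2 * exp 1)"
  shows "(\<lambda>n. Gnp_prob n (p n) (\<lambda>G. {u n, v n} \<in> bootstrap_closure r n G)) \<longlonglongrightarrow> 0"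
proof (rule tendsto_sandwich[OF _ _ tendsto_const closure_bound_tendsto_zero])
  define K where "K = real ((r choose 2) + 1)"
  show "\<forall>\<^sub>F n in sequentially. 0 \<le> Gnp_prob n (p n) (\<lambda>G. {u n, v n} \<in> bootstrap_closure r n G)"
    unfolding Gnp_prob_def using assms(3) by (intro always_eventually allI sum_nonneg) auto
  have "\<forall>\<^sub>F n in sequentially. max (real r) (exp 3 * exp 1 * K ^ (r choose 2)) \<le> ln (real n)"
    using filterlim_compose[OF ln_at_top filterlim_real_sequentially]
    by (rule filterlim_at_top[THEN iffD1, rule_format])
  then show "\<forall>\<^sub>F n in sequentially. Gnp_prob n (p n) (\<lambda>G. {u n, v n} \<in> bootstrap_closure r n G)
      \<le> 2 * ln (real n) * real n powr (- (1 / lambda_r r)) + (2 * K * ln (real n) + 1) / real n"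
    using eventually_ge_at_top[of 2]
  proof eventually_elim
    case (elim n)
    have uv: "u n < n" "v n < n" "u n \<noteq> v n" using assms(2) elim by auto
    have ln: "real r \<le> ln (real n)" using elim by simp
    have "exp 1 * K ^ (r choose 2) / ln (real n) \<le> exp (-3)"
      using elim assms(1) by (simp add: divide_le_eq exp_minus field_simps)
    moreover have "real n > 1" using elim ln assms(1) by simp
    ultimately show ?case
      using Gnp_prob_closure_le[OF assms(1) uv ln, unfolded K_def[symmetric]] assms(3)
        le_powr_minus_div_if_mult_le[OF assms(4)[rule_format]] by (simp add: K_def)
  qed
  show "0 < 1 / lambda_r r" using one_le_lambda_r[OF assms(1)] by simp
qed

end
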